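(* Let $T>0$, $N=2$, $1<M<2$. Consider minimizing $\mathbb V(T)=\frac12(\xi_1(T)^2+\xi_2(T)^2)$ over $\alpha\in\mathcal U_M$, where $\dot\xi_i=-\xi_i+(1-\alpha_i)\bar\xi$ ($i=1,2$), $\bar\xi=\frac12(\xi_1+\xi_2)$, with $\bar\xi(0)>0$ and $\xi_1(0)>\xi_2(0)$. Let $\alpha\in\mathcal U_M$ be an optimal control whose trajectory $\xi$ satisfies $\xi_1(t)\ge\xi_2(t)$ for all $t$. Define $t_0\le t_1\le t_2$ by $$t_0=2\ln\Big(\frac{\xi_1(0)}{2\bar\xi(0)}\Big),\quad t_1=\frac{2}{2-M}\ln\Big(\frac{\xi_1(0)}{2\bar\xi(0)}\Big),\quad t_2=\frac{2}{2-M}\ln\Big(\frac{\xi_1(0)}{\bar\xi(0)}\Big).$$ If $\xi_2(0)>0$: if $T<t_2$ then $(\alpha_1,\alpha_2)\equiv(1,M-1)$ and $0<\xi_2(T)<\xi_1(T)$; if $T\ge t_2$ then $\xi_1(T)=\xi_2(T)$ and $\alpha_1+\alpha_2\equiv M$. If $\xi_2(0)<0$: if $T<t_0$ then $\xi_2(t)<0$ and there exists $t^*\in[0,T)$ such that $(\alpha_1,\alpha_2)(t)=(0,0)$ for all $t\in[0,t^*]$ and $(\alpha_1,\alpha_2)(t)=(1,0)$ for all $t\in(t^*,T]$; if $t_0\le T\le t_1$ then $\alpha_1\equiv1$ and $\xi_2(T)=0$; if $t_1<T<t_2$ then $(\alpha_1,\alpha_2)\equiv(1,M-1)$ and $0<\xi_2(T)<\xi_1(T)$;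 if $t_2\le T$ then $\alpha_1+\alpha_2\equiv M$ and $\xi_1(T)=\xi_2(T)$.
   Context: $\mathcal U_M$ is the set of measurable $\alpha:[0,T]\to[0,1]^2$ with $\alpha_1(t)+\alpha_2(t)\le M$ for all $t$. *)

theory Defs
  imports "HOL-Analysis.Analysis"
begin

definition xbar :: "real \<times> real \<Rightarrow> real" where
  "xbar x = (fst x + snd x) / 2"

definition dyn :: "real \<times> real \<Rightarrow> real \<times> real \<Rightarrow> real \<times> real" where
  "dyn a x = (- fst x + (1 - fst a) * xbar x, - snd x + (1 - snd a) * xbar x)"

definition admissible :: "real \<Rightarrow> real \<Rightarrow> (real \<Rightarrow> real \<times> real) \<Rightarrow> bool" where
  "admissible M T \<alpha> \<longleftrightarrow>
     (\<lambda>t. fst (\<alpha> t)) measurable_on {0..T} \<and> (\<lambda>t. snd (\<alpha> t)) measurable_on {0..T} \<and>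
     (\<forall>t\<in>{0..T}. 0 \<le> fst (\<alpha> t) \<and> fst (\<alpha> t) \<le> 1 \<and> 0 \<le> snd (\<alpha> t) \<and> snd (\<alpha> t) \<le> 1
                 \<and> fst (\<alpha> t) + snd (\<alpha> t) \<le> M)"

text \<open>Trajectory (Caratheodory solution) of the controlled ODE on [0,T]
  with initial state x0.\<close>
definition trajectory :: "real \<Rightarrow> (real \<Rightarrow> real \<times> real) \<Rightarrow> real \<times> real \<Rightarrow> (real \<Rightarrow> real \<times> real) \<Rightarrow> bool" where
  "trajectory T \<alpha> x0 \<xi> \<longleftrightarrow>
     \<xi> 0 = x0 \<and> continuous_on {0..T} \<xi> \<and>
     (\<forall>t\<in>{0..T}. ((\<lambda>s. dyn (\<alpha> s) (\<xi> s)) has_integral (\<xi> t - x0)) {0..t})"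

definition cost :: "real \<times> real \<Rightarrow> real" where
  "cost x = ((fst x)\<^sup>2 + (snd x)\<^sup>2) / 2"

definition optimal :: "real \<Rightarrow> real \<Rightarrow> real \<times> real \<Rightarrow> (real \<Rightarrow> real \<times> real) \<Rightarrow> (real \<Rightarrow> real \<times> real) \<Rightarrow> bool" where
  "optimal M T x0 \<alpha> \<xi> \<longleftrightarrow> admissible M T \<alpha> \<and> trajectory T \<alpha> x0 \<xi> \<and>
     (\<forall>\<beta> \<eta>. admissible M T \<beta> \<and> trajectory T \<beta> x0 \<eta> \<longrightarrow> cost (\<xi> T) \<le> cost (\<eta> T))"

end

theory Submission
  imports Defs
begin

text \<open>Along every admissible trajectory exp t x1 and exp (M t / 2) xb are nondecreasing, since
  their derivatives are exp t (1 - a1) xb and exp (M t / 2) (M - a1 - a2) xb / 2 with xb > 0.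
  This bounds x1 T and xb T from below, with equality only if a1 = 1, respectively
  a1 + a2 = M, almost everywhere. In each regime a competitor with constant control attains
  the relevant bounds, and comparing costs pins down \<xi> T and then the control. For short
  horizons with x2(0) < 0 the competitor switches from (0, 0) to (1, 0) at a time chosen to
  minimise its cost, and the lower bound is a verification argument with the costate of that
  control: \<langle>X, \<xi> T\<rangle> \<ge> |X|^2 for its endpoint X, with equality only for the switching control.\<close>

section \<open>Integration by parts against an indefinite integral\<close>

lemma eq_of_quadratic_increments:
  fixes D :: "real \<Rightarrow> real"
  assumes "a \<le> b"
    and incr: "\<And>x y. a \<le> x \<Longrightarrow> x \<le> y \<Longrightarrow> y \<le> b \<Longrightarrow> \<bar>D y - D x\<bar> \<le> C * (y - x)\<^sup>2"
  shows "D b = D a"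
proof (rule ccontr)
  assume "D b \<noteq> D a"
  then have \<delta>: "0 < \<bar>D b - D a\<bar>" by simp
  obtain m :: nat where "C * (b - a)\<^sup>2 / \<bar>D b - D a\<bar> < m"
    using reals_Archimedean2 by blast
  then obtain n :: nat where n: "C * (b - a)\<^sup>2 / \<bar>D b - D a\<bar> < n" "0 < n"
    by (intro that[of "Suc m"]) auto
  define h where "h = (b - a) / n"
  define x where "x k = a + real k * h" for k :: nat
  have "0 \<le> h" using \<open>a \<le> b\<close> n by (simp add: h_def)
  have step: "\<bar>D (x (Suc k)) - D (x k)\<bar> \<le> C * h\<^sup>2" if "k < n" for k
  proof -
    have "real (Suc k) * h \<le> real n * h" using that \<open>0 \<le> h\<close> by (intro mult_right_mono) auto
    also have "real n * h = b - a" using n by (simp add: h_def)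
    finally have "x (Suc k) \<le> b" by (simp add: x_def)
    moreover have "a \<le> x k" "x k \<le> x (Suc k)" "x (Suc k) - x k = h"
      using \<open>0 \<le> h\<close> by (simp_all add: x_def algebra_simps)
    ultimately show ?thesis using incr by metis
  qed
  have "D b - D a = (\<Sum>k<n. D (x (Suc k)) - D (x k))"
    using sum_lessThan_telescope[of "\<lambda>k. D (x k)" n] n by (simp add: x_def h_def)
  then have "\<bar>D b - D a\<bar> \<le> (\<Sum>k<n. \<bar>D (x (Suc k)) - D (x k)\<bar>)"
    by (metis sum_abs)
  also have "\<dots> \<le> (\<Sum>k<n. C * h\<^sup>2)" by (rule sum_mono) (use step in auto)
  also have "\<dots> = C * (b - a)\<^sup>2 / n" using n by (simp add: h_def power2_eq_square)
  finally have "\<bar>D b - D a\<bar> * n \<le> C * (b - a)\<^sup>2" using n by (simp add: field_simps)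
  moreover have "C * (b - a)\<^sup>2 < n * \<bar>D b - D a\<bar>" using n \<delta> by (simp add: field_simps)
  ultimately show False by (simp add: mult.commute)
qed

lemma has_integral_abs_bound:
  fixes f :: "real \<Rightarrow> real"
  assumes "(f has_integral i) {a..b}" "a \<le> b" "\<And>t. t \<in> {a..b} \<Longrightarrow> \<bar>f t\<bar> \<le> B"
  shows "\<bar>i\<bar> \<le> B * (b - a)"
proof -
  have "0 \<le> B" using assms(2) assms(3)[of a] by force
  have "norm i \<le> B * Henstock_Kurzweil_Integration.content (cbox a b)"
    by (rule has_integral_bound[OF \<open>0 \<le> B\<close>]) (use assms in auto)
  then show ?thesis using assms(2) by simp
qed

lemma has_integral_indefinite_subinterval:
  fixes f F :: "real \<Rightarrow> real"
  assumes F: "\<And>t. t \<in> {a..b} \<Longrightarrow> (f has_integral (F t - F a)) {a..t}"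
    and "a \<le> x" "x \<le> y" "y \<le> b"
  shows "(f has_integral (F y - F x)) {x..y}"
proof -
  have "y \<in> {a..b}" using assms by simp
  then have f: "f integrable_on {a..y}" using F by blast
  have "integral {a..x} f + integral {x..y} f = integral {a..y} f"
    using assms f by (intro Henstock_Kurzweil_Integration.integral_combine) auto
  moreover have "integral {a..t} f = F t - F a" if "t \<in> {a..b}" for t
    using F[OF that] by (rule integral_unique)
  ultimately have "integral {x..y} f = F y - F x"
    using assms by simp
  moreover have "f integrable_on {x..y}"
    using f by (rule integrable_subinterval_real) (use assms in auto)
  ultimately show ?thesis by (metis integrable_integral)
qed

lemma indefinite_integral_lipschitz:
  fixes f F :: "real \<Rightarrow> real"
  assumes F: "\<And>t. t \<in> {a..b} \<Longrightarrow> (f has_integral (F t - F a)) {a..t}"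
    and bound: "\<And>t. t \<in> {a..b} \<Longrightarrow> \<bar>f t\<bar> \<le> K"
    and "a \<le> x" "x \<le> y" "y \<le> b"
  shows "\<bar>F y - F x\<bar> \<le> K * (y - x)"
  by (rule has_integral_abs_bound[OF has_integral_indefinite_subinterval[OF F]])
     (use bound assms in auto)

lemma product_rule_increment_bound:
  fixes f F g g' :: "real \<Rightarrow> real"
  assumes "x \<le> y" "0 \<le> G" "0 \<le> K"
    and f: "(f has_integral (F y - F x)) {x..y}" and g': "(g' has_integral (g y - g x)) {x..y}"
    and gf: "(\<lambda>t. g t * f t) integrable_on {x..y}" and g'F: "(\<lambda>t. g' t * F t) integrable_on {x..y}"
    and bounds: "\<And>t. t \<in> {x..y} \<Longrightarrow> \<bar>f t\<bar> \<le> K \<and> \<bar>F t - F x\<bar> \<le> K * (t - x)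
                                 \<and> \<bar>g' t\<bar> \<le> G \<and> \<bar>g y - g t\<bar> \<le> G * (y - t)"
  shows "\<bar>integral {x..y} (\<lambda>t. g' t * F t + g t * f t) - (g y * F y - g x * F x)\<bar>
           \<le> 2 * G * K * (y - x)\<^sup>2"
proof -
  \<comment> \<open>Freeze g at y against f and F at x against g'; both remainders are O((y - x)^2).\<close>
  have e1: "((\<lambda>t. (g t - g y) * f t) has_integral
              (integral {x..y} (\<lambda>t. g t * f t) - g y * (F y - F x))) {x..y}"
    using has_integral_diff[OF integrable_integral[OF gf] has_integral_mult_right[OF f, of "g y"]]
    by (simp add: algebra_simps)
  have e2: "((\<lambda>t. g' t * (F t - F x)) has_integral
              (integral {x..y} (\<lambda>t. g' t * F t) - F x * (g y - g x))) {x..y}"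
    using has_integral_diff[OF integrable_integral[OF g'F] has_integral_mult_left[OF g', of "F x"]]
    by (simp add: algebra_simps)
  have b1: "\<bar>integral {x..y} (\<lambda>t. g t * f t) - g y * (F y - F x)\<bar> \<le> G * (y - x) * K * (y - x)"
    proof (rule has_integral_abs_bound[OF e1 \<open>x \<le> y\<close>])
      fix t assume t: "t \<in> {x..y}"
      have "G * (y - t) \<le> G * (y - x)" using t \<open>0 \<le> G\<close> by (intro mult_left_mono) auto
      then have "\<bar>g t - g y\<bar> \<le> G * (y - x)"
        using bounds[of t] t by (simp add: abs_minus_commute)
      then show "\<bar>(g t - g y) * f t\<bar> \<le> G * (y - x) * K"
        using bounds[of t] t by (simp add: abs_mult mult_mono')
    qed
  have b2: "\<bar>integral {x..y} (\<lambda>t. g' t * F t) - F x * (g y - g x)\<bar> \<le> G * (K * (y - x)) * (y - x)"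
    proof (rule has_integral_abs_bound[OF e2 \<open>x \<le> y\<close>])
      fix t assume t: "t \<in> {x..y}"
      have "K * (t - x) \<le> K * (y - x)" using t \<open>0 \<le> K\<close> by (intro mult_left_mono) auto
      then have "\<bar>F t - F x\<bar> \<le> K * (y - x)"
        using bounds[of t] t by simp
      then show "\<bar>g' t * (F t - F x)\<bar> \<le> G * (K * (y - x))"
        using bounds[of t] t by (simp add: abs_mult mult_mono')
    qed
  have "integral {x..y} (\<lambda>t. g' t * F t + g t * f t) - (g y * F y - g x * F x)
      = (integral {x..y} (\<lambda>t. g t * f t) - g y * (F y - F x))
        + (integral {x..y} (\<lambda>t. g' t * F t) - F x * (g y - g x))"
    using integral_add[OF g'F gf] by (simp add: algebra_simps)
  moreover have "G * (y - x) * K * (y - x) + G * (K * (y - x)) * (y - x) = 2 * G * K * (y - x)\<^sup>2"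
    by (simp add: power2_eq_square algebra_simps)
  ultimately show ?thesis using b1 b2 abs_triangle_ineq by (smt (verit))
qed


lemma integration_by_parts_terms_integrable:
  fixes f F g g' :: "real \<Rightarrow> real"
  assumes "a \<le> b"
    and F: "\<And>t. t \<in> {a..b} \<Longrightarrow> (f has_integral (F t - F a)) {a..t}"
    and f_bound: "\<And>t. t \<in> {a..b} \<Longrightarrow> \<bar>f t\<bar> \<le> K"
    and g: "\<And>t. (g has_real_derivative g' t) (at t)"
    and g'_cont: "continuous_on {a..b} g'"
  shows "(\<lambda>t. g t * f t) integrable_on {a..b}" and "(\<lambda>t. g' t * F t) integrable_on {a..b}"
proof -
  have "0 \<le> K" using f_bound[of a] \<open>a \<le> b\<close> by auto
  have F_lip: "\<bar>F y - F x\<bar> \<le> K * (y - x)" if "a \<le> x" "x \<le> y" "y \<le> b" for x y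
    using indefinite_integral_lipschitz[OF F f_bound that] .
  have "continuous_on {a..b} F"
  proof (rule lipschitz_on_continuous_on)
    show "K-lipschitz_on {a..b} F"
    proof (rule lipschitz_onI)
      fix x y assume "x \<in> {a..b}" "y \<in> {a..b}"
      then show "dist (F x) (F y) \<le> K * dist x y"
        using F_lip[of x y] F_lip[of y x]
        by (cases "x \<le> y") (auto simp: dist_real_def abs_minus_commute)
    qed (rule \<open>0 \<le> K\<close>)
  qed
  then show "(\<lambda>t. g' t * F t) integrable_on {a..b}"
    using g'_cont by (intro integrable_continuous_interval continuous_intros)
  have "f absolutely_integrable_on {a..b}"
    using F[of b] f_bound \<open>a \<le> b\<close>
    by (intro measurable_bounded_by_integrable_imp_absolutely_integrable[where g = "\<lambda>_. K"])
       (auto intro: integrable_imp_measurable)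
  moreover have "continuous_on {a..b} g"
    using g by (meson DERIV_isCont continuous_at_imp_continuous_on)
  ultimately have "(\<lambda>t. g t * f t) absolutely_integrable_on {a..b}"
    by (intro absolutely_integrable_bounded_measurable_product_real)
       (auto simp: continuous_imp_measurable_on_sets_lebesgue compact_continuous_image
         compact_imp_bounded)
  then show "(\<lambda>t. g t * f t) integrable_on {a..b}"
    by (simp add: absolutely_integrable_on_def)
qed

text \<open>The library's integration by parts needs a derivative outside a countable set, which an
  indefinite integral of a bounded measurable function need not have; instead we show that
  the defect of the product rule has quadratic increments.\<close>
lemma integration_by_parts_indefinite:
  fixes f F g g' :: "real \<Rightarrow> real"
  assumes "a \<le> b"
    and F: "\<And>t. t \<in> {a..b} \<Longrightarrow> (f has_integral (F t - F a)) {a..t}"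
    and f_bound: "\<And>t. t \<in> {a..b} \<Longrightarrow> \<bar>f t\<bar> \<le> K"
    and g: "\<And>t. (g has_real_derivative g' t) (at t)"
    and g'_cont: "continuous_on {a..b} g'"
  shows "((\<lambda>t. g' t * F t + g t * f t) has_integral (g b * F b - g a * F a)) {a..b}"
proof -
  note gf = integration_by_parts_terms_integrable(1)[OF assms]
  note g'F = integration_by_parts_terms_integrable(2)[OF assms]
  have "0 \<le> K" using f_bound[of a] \<open>a \<le> b\<close> by auto
  obtain G where "\<forall>t\<in>{a..b}. \<bar>g' t\<bar> \<le> G"
    using compact_imp_bounded[OF compact_continuous_image[OF g'_cont compact_Icc]]
    by (auto simp: bounded_iff)
  then have G: "\<And>t. t \<in> {a..b} \<Longrightarrow> \<bar>g' t\<bar> \<le> G" by blast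
  have "0 \<le> G" using G[of a] \<open>a \<le> b\<close> by auto
  have g': "(g' has_integral (g t - g a)) {a..t}" if "t \<in> {a..b}" for t
    using that g by (intro fundamental_theorem_of_calculus)
      (auto simp: has_real_derivative_iff_has_vector_derivative[symmetric]
            intro: has_field_derivative_at_within)
  have F_lip: "\<bar>F y - F x\<bar> \<le> K * (y - x)" if "a \<le> x" "x \<le> y" "y \<le> b" for x y
    using indefinite_integral_lipschitz[OF F f_bound that] .
  have g_lip: "\<bar>g y - g x\<bar> \<le> G * (y - x)" if "a \<le> x" "x \<le> y" "y \<le> b" for x y
    using indefinite_integral_lipschitz[OF g' G that] .
  define h where "h t = g' t * F t + g t * f t" for t
  have h: "h integrable_on {a..b}" unfolding h_def using g'F gf by (rule integrable_add)
  define D where "D t = integral {a..t} h - (g t * F t - g a * F a)" for t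
  have "D b = D a"
  proof (rule eq_of_quadratic_increments[OF \<open>a \<le> b\<close>])
    fix x y assume xy: "a \<le> x" "x \<le> y" "y \<le> b"
    then have sub: "{x..y} \<subseteq> {a..b}" by auto
    have "integral {a..x} h + integral {x..y} h = integral {a..y} h"
      using xy by (intro Henstock_Kurzweil_Integration.integral_combine
          integrable_subinterval_real[OF h]) auto
    then have "D y - D x = integral {x..y} h - (g y * F y - g x * F x)"
      by (simp add: D_def algebra_simps)
    also have "\<bar>\<dots>\<bar> \<le> 2 * G * K * (y - x)\<^sup>2"
      unfolding h_def
    proof (rule product_rule_increment_bound[OF \<open>x \<le> y\<close> \<open>0 \<le> G\<close> \<open>0 \<le> K\<close>
          has_integral_indefinite_subinterval[OF F xy] has_integral_indefinite_subinterval[OF g' xy]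
          integrable_subinterval_real[OF gf sub] integrable_subinterval_real[OF g'F sub]])
      fix t assume "t \<in> {x..y}"
      then show "\<bar>f t\<bar> \<le> K \<and> \<bar>F t - F x\<bar> \<le> K * (t - x) \<and> \<bar>g' t\<bar> \<le> G \<and> \<bar>g y - g t\<bar> \<le> G * (y - t)"
        using xy F_lip[of x t] g_lip[of t y] f_bound[of t] G[of t] by auto
    qed
    finally show "\<bar>D y - D x\<bar> \<le> 2 * G * K * (y - x)\<^sup>2" .
  qed
  then show ?thesis
    using integrable_integral[OF h] by (simp add: D_def h_def[abs_def])
qed

lemma nonneg_has_integral_0_imp_AE:
  fixes f :: "real \<Rightarrow> real"
  assumes nonneg: "\<And>x. x \<in> {a..b} \<Longrightarrow> 0 \<le> f x" and f: "(f has_integral 0) {a..b}"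
  shows "AE x in lborel. x \<in> {a..b} \<longrightarrow> f x = 0"
proof -
  define u where "u x = ennreal (if x \<in> {a..b} then f x else 0)" for x
  have "integral\<^sup>N lborel (\<lambda>x. ennreal (f x) * indicator {a..b} x) = ennreal 0"
    by (rule nn_integral_has_integral_lebesgue'[OF nonneg f]) auto
  moreover have "u = (\<lambda>x. ennreal (f x) * indicator {a..b} x)"
    by (auto simp: u_def indicator_def)
  ultimately have "integral\<^sup>N lebesgue u = 0" by (simp add: nn_integral_completion)
  moreover have "f \<in> borel_measurable (lebesgue_on {a..b})"
    using f by (intro integrable_imp_measurable) auto
  then have "(\<lambda>x. if x \<in> {a..b} then f x else 0) \<in> borel_measurable lebesgue"
    by (rule borel_measurable_if_I) simp
  then have "u \<in> borel_measurable lebesgue" unfolding u_def by measurable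
  ultimately have "AE x in lebesgue. u x = 0" by (simp add: nn_integral_0_iff_AE)
  then have "AE x in lebesgue. x \<in> {a..b} \<longrightarrow> f x = 0"
    by eventually_elim (use nonneg in \<open>auto simp: u_def\<close>)
  then show ?thesis by (simp add: AE_completion_iff)
qed

lemma has_integral_nonneg_off_point:
  fixes f :: "real \<Rightarrow> real"
  assumes f: "(f has_integral I) {a..b}" and nonneg: "\<And>t. t \<in> {a..b} \<Longrightarrow> t \<noteq> c \<Longrightarrow> 0 \<le> f t"
  shows "0 \<le> I"
    and "I = 0 \<Longrightarrow> AE t in lborel. t \<in> {a..b} \<longrightarrow> t \<noteq> c \<longrightarrow> f t = 0"
proof -
  define g where "g t = (if t = c then 0 else f t)" for t
  have g: "(g has_integral I) {a..b}"
    using f by (rule has_integral_spike_finite[rotated 2, where S = "{c}"]) (auto simp: g_def)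
  have g_nonneg: "0 \<le> g t" if "t \<in> {a..b}" for t
    using nonneg[OF that] by (simp add: g_def)
  show "0 \<le> I" using has_integral_nonneg[OF g g_nonneg] .
  assume "I = 0"
  then have "AE t in lborel. t \<in> {a..b} \<longrightarrow> g t = 0"
    using g g_nonneg by (intro nonneg_has_integral_0_imp_AE) auto
  then show "AE t in lborel. t \<in> {a..b} \<longrightarrow> t \<noteq> c \<longrightarrow> f t = 0"
    by eventually_elim (auto simp: g_def)
qed

section \<open>Explicit solutions for constant and switching controls\<close>

text \<open>The explicit solution of the dynamics under a constant control c, passing through q at
  time s: the mean decays like exp (-(c1 + c2) (t - s) / 2), and variation of constants gives
  the first component. The formula needs c1 + c2 \<noteq> 2.\<close>
definition flow :: "real \<times> real \<Rightarrow> real \<times> real \<Rightarrow> real \<Rightarrow> real \<Rightarrow> real \<times> real" where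
  "flow c q s t = (let m = fst c + snd c; u = t - s;
     y = fst q * exp (- u) + (1 - fst c) * xbar q * (exp (- (m * u / 2)) - exp (- u)) / (1 - m / 2)
   in (y, 2 * xbar q * exp (- (m * u / 2)) - y))"

lemma flow_start [simp]: "flow c q s s = q"
  by (simp add: flow_def xbar_def Let_def prod_eq_iff field_simps)

lemma fst_flow: "fst (flow c q s t) = fst q * exp (- (t - s)) + (1 - fst c) * xbar q *
   (exp (- ((fst c + snd c) * (t - s) / 2)) - exp (- (t - s))) / (1 - (fst c + snd c) / 2)"
  by (simp add: flow_def Let_def)

lemma xbar_flow: "xbar (flow c q s t) = xbar q * exp (- ((fst c + snd c) * (t - s) / 2))"
  by (simp add: flow_def Let_def xbar_def)

lemma snd_eq_2_xbar_minus_fst: "snd x = 2 * xbar x - fst x"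
  by (simp add: xbar_def field_simps)

lemma flow_has_vector_derivative:
  assumes "fst c + snd c \<noteq> 2"
  shows "(flow c q s has_vector_derivative dyn c (flow c q s t)) (at t)"
proof -
  define m where "m = fst c + snd c"
  define Y where "Y t = fst q * exp (- (t - s)) + (1 - fst c) * xbar q *
     (exp (- (m * (t - s) / 2)) - exp (- (t - s))) / (1 - m / 2)" for t
  define X where "X t = xbar q * exp (- (m * (t - s) / 2))" for t
  have m: "1 - m / 2 \<noteq> 0" using assms by (simp add: m_def)
  have flow: "flow c q s = (\<lambda>t. (Y t, 2 * X t - Y t))"
    by (simp add: fun_eq_iff flow_def Let_def Y_def X_def m_def)
  have X': "(X has_real_derivative (- m / 2 * X t)) (at t)"
    unfolding X_def by (auto intro!: derivative_eq_intros simp: field_simps)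
  have "(Y has_real_derivative (fst q * (exp (- (t - s)) * (-1)) + (1 - fst c) * xbar q *
      (exp (- (m * (t - s) / 2)) * (- m / 2) - exp (- (t - s)) * (-1)) / (1 - m / 2))) (at t)"
    unfolding Y_def using m by (auto intro!: derivative_eq_intros)
  moreover have "fst q * (exp (- (t - s)) * (-1)) + (1 - fst c) * xbar q *
      (exp (- (m * (t - s) / 2)) * (- m / 2) - exp (- (t - s)) * (-1)) / (1 - m / 2)
      = - Y t + (1 - fst c) * X t"
    unfolding Y_def X_def using m by (simp add: field_simps)
  ultimately have Y': "(Y has_real_derivative (- Y t + (1 - fst c) * X t)) (at t)"
    by simp
  have "((\<lambda>t. (Y t, 2 * X t - Y t)) has_vector_derivative
      (- Y t + (1 - fst c) * X t, 2 * (- m / 2 * X t) - (- Y t + (1 - fst c) * X t))) (at t)"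
    using X' Y' by (auto intro!: has_vector_derivative_Pair derivative_eq_intros
        simp: has_real_derivative_iff_has_vector_derivative[symmetric])
  moreover have "xbar (Y t, 2 * X t - Y t) = X t" by (simp add: xbar_def)
  then have "dyn c (Y t, 2 * X t - Y t)
      = (- Y t + (1 - fst c) * X t, 2 * (- m / 2 * X t) - (- Y t + (1 - fst c) * X t))"
    by (simp add: dyn_def m_def field_simps)
  ultimately show ?thesis by (simp add: flow)
qed

lemma trajectory_concat:
  fixes P Q :: "real \<Rightarrow> real \<times> real" and c d :: "real \<times> real"
  assumes P: "\<And>t. (P has_vector_derivative dyn c (P t)) (at t)"
    and Q: "\<And>t. (Q has_vector_derivative dyn d (Q t)) (at t)"
    and "P \<tau> = Q \<tau>" "0 \<le> \<tau>"
  shows "trajectory T (\<lambda>t. if t \<le> \<tau> then c else d) (P 0) (\<lambda>t. if t \<le> \<tau> then P t else Q t)"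
  unfolding trajectory_def
proof (intro conjI ballI)
  show "(if 0 \<le> \<tau> then P 0 else Q 0) = P 0" using \<open>0 \<le> \<tau>\<close> by simp
  have P_cont: "continuous_on S P" for S
    using P by (intro continuous_on_vector_derivative) (auto intro: has_vector_derivative_at_within)
  have Q_cont: "continuous_on S Q" for S
    using Q by (intro continuous_on_vector_derivative) (auto intro: has_vector_derivative_at_within)
  show "continuous_on {0..T} (\<lambda>t. if t \<le> \<tau> then P t else Q t)"
    by (rule continuous_on_cases_le[OF P_cont Q_cont])
      (auto intro: continuous_intros simp: \<open>P \<tau> = Q \<tau>\<close>)
  let ?F = "\<lambda>s. dyn (if s \<le> \<tau> then c else d) (if s \<le> \<tau> then P s else Q s)"
  have P_int: "(?F has_integral (P y - P x)) {x..y}" if "x \<le> y" "y \<le> \<tau>" for x y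
  proof -
    have "((\<lambda>s. dyn c (P s)) has_integral (P y - P x)) {x..y}"
      using that P by (intro fundamental_theorem_of_calculus)
        (auto intro: has_vector_derivative_at_within)
    then show ?thesis
      by (rule has_integral_spike_finite[rotated 2, where S = "{}"]) (use that in auto)
  qed
  have Q_int: "(?F has_integral (Q y - Q \<tau>)) {\<tau>..y}" if "\<tau> \<le> y" for y
  proof -
    have "((\<lambda>s. dyn d (Q s)) has_integral (Q y - Q \<tau>)) {\<tau>..y}"
      using that Q by (intro fundamental_theorem_of_calculus)
        (auto intro: has_vector_derivative_at_within)
    then show ?thesis
      by (rule has_integral_spike_finite[rotated 2, where S = "{\<tau>}"]) auto
  qed
  fix t assume t: "t \<in> {0..T}"
  show "(?F has_integral ((if t \<le> \<tau> then P t else Q t) - P 0)) {0..t}"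
  proof (cases "t \<le> \<tau>")
    case True
    then show ?thesis using P_int[of 0 t] t by simp
  next
    case False
    have "(?F has_integral (P \<tau> - P 0 + (Q t - Q \<tau>))) {0..t}"
      using False \<open>0 \<le> \<tau>\<close> by (intro has_integral_combine[OF _ _ P_int Q_int]) auto
    then show ?thesis using False \<open>P \<tau> = Q \<tau>\<close> by simp
  qed
qed

lemma constant_control_candidate:
  assumes "0 \<le> c1" "c1 \<le> 1" "0 \<le> c2" "c2 \<le> 1" "c1 + c2 \<le> M" "c1 + c2 \<noteq> 2"
  shows "admissible M T (\<lambda>t. (c1, c2)) \<and> trajectory T (\<lambda>t. (c1, c2)) x0 (flow (c1, c2) x0 0)"
proof
  show "admissible M T (\<lambda>t. (c1, c2))" using assms by (simp add: admissible_def)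
  have "trajectory T (\<lambda>t. if t \<le> 0 then (c1, c2) else (c1, c2)) (flow (c1, c2) x0 0 0)
      (\<lambda>t. if t \<le> 0 then flow (c1, c2) x0 0 t else flow (c1, c2) x0 0 t)"
    by (rule trajectory_concat) (use assms in \<open>auto intro: flow_has_vector_derivative\<close>)
  then show "trajectory T (\<lambda>t. (c1, c2)) x0 (flow (c1, c2) x0 0)" by simp
qed

definition switch_control :: "real \<Rightarrow> real \<Rightarrow> real \<times> real" where
  "switch_control \<tau> t = (if t \<le> \<tau> then (0, 0) else (1, 0))"

definition switch_traj :: "real \<times> real \<Rightarrow> real \<Rightarrow> real \<Rightarrow> real \<times> real" where
  "switch_traj x0 \<tau> t =
     (if t \<le> \<tau> then flow (0, 0) x0 0 t else flow (1, 0) (flow (0, 0) x0 0 \<tau>) \<tau> t)"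

lemma switch_candidate:
  assumes "0 \<le> \<tau>" "1 \<le> M"
  shows "admissible M T (switch_control \<tau>) \<and> trajectory T (switch_control \<tau>) x0 (switch_traj x0 \<tau>)"
proof
  have "(\<lambda>t::real. if t \<le> \<tau> then c else c') \<in> borel_measurable (lebesgue_on {0..T})"
    for c c' :: real
    by (intro measurable_restrict_space1 measurable_completion) measurable
  then show "admissible M T (switch_control \<tau>)"
    using assms by (auto simp: admissible_def switch_control_def if_distrib
        measurable_on_iff_borel_measurable cong: if_cong)
  have "trajectory T (\<lambda>t. if t \<le> \<tau> then (0, 0) else (1, 0)) (flow (0, 0) x0 0 0)
      (switch_traj x0 \<tau>)"
    unfolding switch_traj_def
    by (rule trajectory_concat) (use assms in \<open>auto intro: flow_has_vector_derivative\<close>)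
  then show "trajectory T (switch_control \<tau>) x0 (switch_traj x0 \<tau>)"
    by (simp add: switch_control_def[abs_def])
qed

definition switch_endpoint :: "real \<times> real \<Rightarrow> real \<Rightarrow> real \<Rightarrow> real \<times> real" where
  "switch_endpoint x0 T v = (let k = exp (- T) * (fst x0 - xbar x0)
     in (k + xbar x0 * v\<^sup>2, 2 * xbar x0 * v - xbar x0 * v\<^sup>2 - k))"

lemma switch_traj_endpoint:
  assumes "0 < v" "v \<le> 1"
  shows "switch_traj x0 (T + 2 * ln v) T = switch_endpoint x0 T v"
proof -
  define \<tau> where "\<tau> = T + 2 * ln v"
  have "\<tau> \<le> T" using assms by (simp add: \<tau>_def)
  have v: "exp ((\<tau> - T) / 2) = v" using \<open>0 < v\<close> by (simp add: \<tau>_def)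
  have "exp (\<tau> - T) = (exp ((\<tau> - T) / 2))\<^sup>2" by (simp add: power2_eq_square flip: exp_add)
  moreover have "exp (- \<tau>) * exp (- (T - \<tau>)) = exp (- T)" by (simp flip: exp_add)
  then have "fst (switch_traj x0 \<tau> T) = exp (- T) * (fst x0 - xbar x0) + xbar x0 * exp (\<tau> - T)"
    using \<open>\<tau> \<le> T\<close> by (cases "\<tau> = T") (auto simp: switch_traj_def fst_flow algebra_simps)
  moreover have "xbar (switch_traj x0 \<tau> T) = xbar x0 * exp ((\<tau> - T) / 2)"
    using \<open>\<tau> \<le> T\<close> by (cases "\<tau> = T") (auto simp: switch_traj_def xbar_flow field_simps)
  ultimately show ?thesis
    unfolding \<tau>_def[symmetric]
    using v snd_eq_2_xbar_minus_fst[of "switch_traj x0 \<tau> T"]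
    by (simp add: switch_endpoint_def Let_def prod_eq_iff algebra_simps)
qed

section \<open>Monotone quantities along an admissible trajectory\<close>

locale controlled_trajectory =
  fixes M T :: real and x0 :: "real \<times> real" and \<alpha> \<xi> :: "real \<Rightarrow> real \<times> real"
  assumes admissible: "admissible M T \<alpha>" and trajectory: "trajectory T \<alpha> x0 \<xi>"
    and T_pos: "0 < T" and xbar_x0_pos: "0 < xbar x0"
begin

definition "x1 t = fst (\<xi> t)"
definition "x2 t = snd (\<xi> t)"
definition "xb t = (x1 t + x2 t) / 2"
definition "a1 t = fst (\<alpha> t)"
definition "a2 t = snd (\<alpha> t)"

definition "f1 t = - x1 t + (1 - a1 t) * xb t"
definition "f2 t = - x2 t + (1 - a2 t) * xb t"
definition "fb t = - (a1 t + a2 t) / 2 * xb t"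

lemma xb_eq_xbar: "xb t = xbar (\<xi> t)"
  by (simp add: xb_def xbar_def x1_def x2_def)

lemma \<alpha>_eq: "\<alpha> t = (a1 t, a2 t)"
  by (simp add: a1_def a2_def)

lemma initial_state [simp]: "x1 0 = fst x0" "x2 0 = snd x0" "xb 0 = xbar x0"
  using trajectory by (simp_all add: trajectory_def x1_def x2_def xb_eq_xbar)

lemma control_bounds:
  assumes "t \<in> {0..T}"
  shows "0 \<le> a1 t" "a1 t \<le> 1" "0 \<le> a2 t" "a2 t \<le> 1" "a1 t + a2 t \<le> M"
  using admissible assms by (auto simp: admissible_def a1_def a2_def)

lemma has_integral_f1: "t \<in> {0..T} \<Longrightarrow> (f1 has_integral (x1 t - x1 0)) {0..t}"
  and has_integral_f2: "t \<in> {0..T} \<Longrightarrow> (f2 has_integral (x2 t - x2 0)) {0..t}"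
  and has_integral_fb: "t \<in> {0..T} \<Longrightarrow> (fb has_integral (xb t - xb 0)) {0..t}"
proof -
  assume "t \<in> {0..T}"
  then have \<xi>: "((\<lambda>s. dyn (\<alpha> s) (\<xi> s)) has_integral (\<xi> t - \<xi> 0)) {0..t}"
    using trajectory by (simp add: trajectory_def)
  have "(\<lambda>s. fst (dyn (\<alpha> s) (\<xi> s))) = f1" "(\<lambda>s. snd (dyn (\<alpha> s) (\<xi> s))) = f2"
    by (simp_all add: fun_eq_iff dyn_def f1_def f2_def x1_def x2_def a1_def a2_def xb_eq_xbar)
  then show f1: "(f1 has_integral (x1 t - x1 0)) {0..t}"
    and f2: "(f2 has_integral (x2 t - x2 0)) {0..t}"
    using has_integral_linear[OF \<xi> bounded_linear_fst] has_integral_linear[OF \<xi> bounded_linear_snd]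
    by (simp_all add: o_def x1_def x2_def)
  have "fb = (\<lambda>s. (f1 s + f2 s) / 2)"
    by (simp add: fun_eq_iff f1_def f2_def fb_def xb_def field_simps)
  then show "(fb has_integral (xb t - xb 0)) {0..t}"
    using has_integral_divide[OF has_integral_add[OF f1 f2], of 2]
    by (simp add: xb_def diff_divide_distrib add_divide_distrib algebra_simps)
qed

lemma velocity_bound:
  obtains K where "\<And>t. t \<in> {0..T} \<Longrightarrow> \<bar>f1 t\<bar> \<le> K \<and> \<bar>f2 t\<bar> \<le> K \<and> \<bar>fb t\<bar> \<le> K"
proof -
  have "continuous_on {0..T} \<xi>" using trajectory by (simp add: trajectory_def)
  from compact_imp_bounded[OF compact_continuous_image[OF this compact_Icc]]
  obtain B where B: "\<forall>t\<in>{0..T}. norm (\<xi> t) \<le> B"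
    by (auto simp: bounded_iff)
  have x: "\<bar>x1 t\<bar> \<le> B" "\<bar>x2 t\<bar> \<le> B" if "t \<in> {0..T}" for t
    using B that norm_fst_le[of "x1 t" "x2 t"] norm_snd_le[of "x2 t" "x1 t"]
    by (auto simp: x1_def x2_def intro: order_trans)
  show ?thesis
  proof (rule that[of "2 * B"])
    fix t assume t: "t \<in> {0..T}"
    have xb: "\<bar>xb t\<bar> \<le> B" using x[OF t] by (simp add: xb_def)
    have c: "\<bar>c * xb t\<bar> \<le> B" if "0 \<le> c" "c \<le> 1" for c
      using mult_mono[OF that(2) xb] that by (simp add: abs_mult)
    note a = control_bounds[OF t]
    have "\<bar>(1 - a1 t) * xb t\<bar> \<le> B" "\<bar>(1 - a2 t) * xb t\<bar> \<le> B"
      using c[of "1 - a1 t"] c[of "1 - a2 t"] a by auto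
    moreover have "fb t = - ((a1 t + a2 t) / 2 * xb t)" by (simp add: fb_def algebra_simps)
    then have "\<bar>fb t\<bar> \<le> B"
      using c[of "(a1 t + a2 t) / 2"] a by (simp only: abs_minus_cancel) simp
    ultimately show "\<bar>f1 t\<bar> \<le> 2 * B \<and> \<bar>f2 t\<bar> \<le> 2 * B \<and> \<bar>fb t\<bar> \<le> 2 * B"
      using x[OF t] by (auto simp: f1_def f2_def abs_le_iff)
  qed
qed

lemma has_integral_weighted:
  assumes "0 \<le> a" "a \<le> b" "b \<le> T"
    and g: "\<And>t. (g has_real_derivative g' t) (at t)" and "continuous_on {a..b} g'"
  shows "((\<lambda>t. g' t * x1 t + g t * f1 t) has_integral (g b * x1 b - g a * x1 a)) {a..b}"
    and "((\<lambda>t. g' t * x2 t + g t * f2 t) has_integral (g b * x2 b - g a * x2 a)) {a..b}"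
    and "((\<lambda>t. g' t * xb t + g t * fb t) has_integral (g b * xb b - g a * xb a)) {a..b}"
proof -
  obtain K where K: "\<And>t. t \<in> {0..T} \<Longrightarrow> \<bar>f1 t\<bar> \<le> K \<and> \<bar>f2 t\<bar> \<le> K \<and> \<bar>fb t\<bar> \<le> K"
    using velocity_bound by blast
  have sub: "t \<in> {a..b} \<Longrightarrow> t \<in> {0..T}" for t using assms by auto
  show "((\<lambda>t. g' t * x1 t + g t * f1 t) has_integral (g b * x1 b - g a * x1 a)) {a..b}"
    using assms K sub
    by (intro integration_by_parts_indefinite[where K = K] has_integral_indefinite_subinterval[
          OF has_integral_f1]) auto
  show "((\<lambda>t. g' t * x2 t + g t * f2 t) has_integral (g b * x2 b - g a * x2 a)) {a..b}"
    using assms K sub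
    by (intro integration_by_parts_indefinite[where K = K] has_integral_indefinite_subinterval[
          OF has_integral_f2]) auto
  show "((\<lambda>t. g' t * xb t + g t * fb t) has_integral (g b * xb b - g a * xb a)) {a..b}"
    using assms K sub
    by (intro integration_by_parts_indefinite[where K = K] has_integral_indefinite_subinterval[
          OF has_integral_fb]) auto
qed


lemma exp_weighted_x1:
  assumes "0 \<le> a" "a \<le> b" "b \<le> T"
  shows "((\<lambda>t. exp t * ((1 - a1 t) * xb t)) has_integral (exp b * x1 b - exp a * x1 a)) {a..b}"
proof -
  have "((\<lambda>t. exp t * x1 t + exp t * f1 t) has_integral (exp b * x1 b - exp a * x1 a)) {a..b}"
    by (rule has_integral_weighted(1)[OF assms]) (auto intro!: derivative_eq_intros continuous_intros)
  moreover have "(\<lambda>t. exp t * x1 t + exp t * f1 t) = (\<lambda>t. exp t * ((1 - a1 t) * xb t))"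
    by (simp add: fun_eq_iff f1_def algebra_simps)
  ultimately show ?thesis by simp
qed

lemma exp_weighted_x2:
  assumes "0 \<le> a" "a \<le> b" "b \<le> T"
  shows "((\<lambda>t. exp t * ((1 - a2 t) * xb t)) has_integral (exp b * x2 b - exp a * x2 a)) {a..b}"
proof -
  have "((\<lambda>t. exp t * x2 t + exp t * f2 t) has_integral (exp b * x2 b - exp a * x2 a)) {a..b}"
    by (rule has_integral_weighted(2)[OF assms]) (auto intro!: derivative_eq_intros continuous_intros)
  moreover have "(\<lambda>t. exp t * x2 t + exp t * f2 t) = (\<lambda>t. exp t * ((1 - a2 t) * xb t))"
    by (simp add: fun_eq_iff f2_def algebra_simps)
  ultimately show ?thesis by simp
qed

lemma exp_weighted_xb:
  assumes "0 \<le> a" "a \<le> b" "b \<le> T"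
  shows "((\<lambda>t. exp (M * t / 2) * ((M - (a1 t + a2 t)) * xb t / 2)) has_integral
           (exp (M * b / 2) * xb b - exp (M * a / 2) * xb a)) {a..b}"
proof -
  have "((\<lambda>t. M / 2 * exp (M * t / 2) * xb t + exp (M * t / 2) * fb t) has_integral
           (exp (M * b / 2) * xb b - exp (M * a / 2) * xb a)) {a..b}"
    by (rule has_integral_weighted(3)[OF assms]) (auto intro!: derivative_eq_intros continuous_intros)
  moreover have "(\<lambda>t. M / 2 * exp (M * t / 2) * xb t + exp (M * t / 2) * fb t)
      = (\<lambda>t. exp (M * t / 2) * ((M - (a1 t + a2 t)) * xb t / 2))"
    by (simp add: fun_eq_iff fb_def field_simps)
  ultimately show ?thesis by simp
qed

text \<open>Before the first zero of xb the weighted mean exp (M t / 2) xb is nondecreasing,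
  so it cannot drop from xbar x0 > 0 to 0.\<close>
lemma xb_pos:
  assumes t: "t \<in> {0..T}"
  shows "0 < xb t"
proof (rule ccontr)
  assume "\<not> 0 < xb t"
  define Z where "Z = {s \<in> {0..t}. xb s \<le> 0}"
  have "continuous_on {0..T} xb"
    using trajectory unfolding trajectory_def xb_eq_xbar xbar_def
    by (auto intro!: continuous_intros)
  then have "continuous_on {0..t} xb" by (rule continuous_on_subset) (use t in auto)
  then have "closed Z" unfolding Z_def by (rule continuous_on_closed_Collect_le) auto
  moreover have "Z \<noteq> {}" using t \<open>\<not> 0 < xb t\<close> by (auto simp: Z_def)
  moreover have "bdd_below Z" by (auto simp: Z_def bdd_below_def)
  ultimately have "Inf Z \<in> Z" using closed_contains_Inf by blast
  define s where "s = Inf Z"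
  have s: "0 \<le> s" "s \<le> t" "s \<le> T" "xb s \<le> 0"
    using \<open>Inf Z \<in> Z\<close> t by (auto simp: Z_def s_def)
  have before: "0 < xb r" if "0 \<le> r" "r < s" for r
  proof (rule ccontr)
    assume "\<not> 0 < xb r"
    then have "r \<in> Z" using that s by (simp add: Z_def)
    then have "s \<le> r" unfolding s_def using \<open>bdd_below Z\<close> by (rule cInf_lower)
    then show False using that by simp
  qed
  have "((\<lambda>r. if r = s then 0 else exp (M * r / 2) * ((M - (a1 r + a2 r)) * xb r / 2))
      has_integral (exp (M * s / 2) * xb s - exp (M * 0 / 2) * xb 0)) {0..s}"
    using exp_weighted_xb[of 0 s] s by (subst has_integral_spike_finite_eq[of "{s}"]) auto
  then have "0 \<le> exp (M * s / 2) * xb s - exp (M * 0 / 2) * xb 0"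
  proof (rule has_integral_nonneg)
    fix r assume "r \<in> {0..s}"
    then show "0 \<le> (if r = s then 0 else exp (M * r / 2) * ((M - (a1 r + a2 r)) * xb r / 2))"
      using before[of r] control_bounds[of r] s by auto
  qed
  moreover have "exp (M * s / 2) * xb s \<le> 0" using s by (simp add: mult_nonneg_nonpos)
  ultimately show False using xbar_x0_pos by simp
qed

lemma x1_lower_bound: "fst x0 * exp (- T) \<le> x1 T"
  and x1_lower_bound_eq:
    "x1 T = fst x0 * exp (- T) \<Longrightarrow> AE t in lborel. t \<in> {0..T} \<longrightarrow> a1 t = 1"
proof -
  have I: "((\<lambda>t. exp t * ((1 - a1 t) * xb t)) has_integral (exp T * x1 T - fst x0)) {0..T}"
    using exp_weighted_x1[of 0 T] T_pos by simp
  have nonneg: "0 \<le> exp t * ((1 - a1 t) * xb t)" if "t \<in> {0..T}" for t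
    using control_bounds[OF that] xb_pos[OF that] by simp
  have "fst x0 \<le> exp T * x1 T" using has_integral_nonneg[OF I nonneg] by simp
  then have "fst x0 * exp (- T) \<le> exp T * x1 T * exp (- T)" by simp
  then show "fst x0 * exp (- T) \<le> x1 T" by (simp add: exp_minus field_simps)
  assume "x1 T = fst x0 * exp (- T)"
  then have "exp T * x1 T - fst x0 = 0" by (simp add: exp_minus)
  then have "AE t in lborel. t \<in> {0..T} \<longrightarrow> exp t * ((1 - a1 t) * xb t) = 0"
    using I nonneg by (intro nonneg_has_integral_0_imp_AE) auto
  then show "AE t in lborel. t \<in> {0..T} \<longrightarrow> a1 t = 1"
    by eventually_elim (use xb_pos in force)
qed

lemma xb_lower_bound: "xbar x0 * exp (- (M * T / 2)) \<le> xb T"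
  and xb_lower_bound_eq:
    "xb T = xbar x0 * exp (- (M * T / 2)) \<Longrightarrow> AE t in lborel. t \<in> {0..T} \<longrightarrow> a1 t + a2 t = M"
proof -
  have I: "((\<lambda>t. exp (M * t / 2) * ((M - (a1 t + a2 t)) * xb t / 2)) has_integral
      (exp (M * T / 2) * xb T - xbar x0)) {0..T}"
    using exp_weighted_xb[of 0 T] T_pos by simp
  have nonneg: "0 \<le> exp (M * t / 2) * ((M - (a1 t + a2 t)) * xb t / 2)" if "t \<in> {0..T}" for t
    using control_bounds[OF that] xb_pos[OF that] by simp
  have "xbar x0 \<le> exp (M * T / 2) * xb T" using has_integral_nonneg[OF I nonneg] by simp
  then have "xbar x0 * exp (- (M * T / 2)) \<le> exp (M * T / 2) * xb T * exp (- (M * T / 2))"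
    by simp
  then show "xbar x0 * exp (- (M * T / 2)) \<le> xb T" by (simp add: exp_minus field_simps)
  assume "xb T = xbar x0 * exp (- (M * T / 2))"
  then have "exp (M * T / 2) * xb T - xbar x0 = 0" by (simp add: exp_minus)
  then have "AE t in lborel. t \<in> {0..T} \<longrightarrow> exp (M * t / 2) * ((M - (a1 t + a2 t)) * xb t / 2) = 0"
    using I nonneg by (intro nonneg_has_integral_0_imp_AE) auto
  then show "AE t in lborel. t \<in> {0..T} \<longrightarrow> a1 t + a2 t = M"
    by eventually_elim (use xb_pos in force)
qed

lemma exp_x2_mono:
  assumes "t \<in> {0..T}"
  shows "exp t * x2 t \<le> exp T * x2 T"
proof -
  have "0 \<le> exp T * x2 T - exp t * x2 t"
  proof (rule has_integral_nonneg[OF exp_weighted_x2])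
    fix s assume "s \<in> {t..T}"
    then have "s \<in> {0..T}" using assms by auto
    then show "0 \<le> exp s * ((1 - a2 s) * xb s)"
      using control_bounds(4)[of s] xb_pos[of s] by simp
  qed (use assms in auto)
  then show ?thesis by simp
qed

end

section \<open>The optimal switching time\<close>

lemma interval_min_first_order:
  fixes f f' :: "real \<Rightarrow> real"
  assumes "a < b" and f: "\<And>x. (f has_real_derivative f' x) (at x)" and "0 < f' b"
  obtains s where "a \<le> s" "s < b" "0 \<le> f' s" "a < s \<Longrightarrow> f' s = 0"
proof -
  have "continuous_on {a..b} f"
    using f by (meson DERIV_isCont continuous_at_imp_continuous_on)
  then obtain s where s: "s \<in> {a..b}" and min: "\<And>y. y \<in> {a..b} \<Longrightarrow> f s \<le> f y"
    using continuous_attains_inf[of "{a..b}" f] \<open>a < b\<close> by auto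
  have "s \<noteq> b"
  proof
    assume "s = b"
    obtain d where "0 < d" and d: "\<And>h. 0 < h \<Longrightarrow> h < d \<Longrightarrow> f (b - h) < f b"
      using DERIV_pos_inc_left[OF f \<open>0 < f' b\<close>] by blast
    define h where "h = min (d / 2) (b - a)"
    have "0 < h" "h < d" "b - h \<in> {a..b}" using \<open>0 < d\<close> \<open>a < b\<close> by (auto simp: h_def)
    then show False using d[of h] min[of "b - h"] \<open>s = b\<close> by simp
  qed
  with s have "s < b" by simp
  moreover have "0 \<le> f' s"
  proof (rule ccontr)
    assume "\<not> 0 \<le> f' s"
    then obtain d where "0 < d" and d: "\<And>h. 0 < h \<Longrightarrow> h < d \<Longrightarrow> f (s + h) < f s"
      using DERIV_neg_dec_right[OF f, of s] by force
    define h where "h = min (d / 2) (b - s)"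
    have "0 < h" "h < d" "s + h \<in> {a..b}" using \<open>0 < d\<close> \<open>s < b\<close> s by (auto simp: h_def)
    then show False using d[of h] min[of "s + h"] by simp
  qed
  moreover have "f' s = 0" if "a < s"
  proof (rule DERIV_local_min[OF f])
    show "0 < min (s - a) (b - s)" using that \<open>s < b\<close> by simp
    show "\<forall>y. \<bar>s - y\<bar> < min (s - a) (b - s) \<longrightarrow> f s \<le> f y"
      by (auto intro!: min simp: abs_less_iff)
  qed
  ultimately show ?thesis using s that by auto
qed

definition switching_function :: "real \<times> real \<Rightarrow> real \<Rightarrow> real" where
  "switching_function X v = (fst X - snd X) * v + snd X"

text \<open>First-order optimality of the switching time \<tau> for the endpoint X of the switching
  trajectory, in terms of v = exp ((\<tau> - T) / 2): the switching function is nonnegative, and it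
  vanishes when the switch is interior.\<close>
definition switch_optimality :: "real \<Rightarrow> real \<times> real \<Rightarrow> real \<Rightarrow> bool" where
  "switch_optimality T X \<tau> \<longleftrightarrow> snd X < 0 \<and> snd X < fst X \<and>
     0 \<le> switching_function X (exp ((\<tau> - T) / 2)) \<and>
     (0 < \<tau> \<longrightarrow> switching_function X (exp ((\<tau> - T) / 2)) = 0)"

text \<open>The derivative of the cost of the switching endpoint is a positive multiple of the
  switching function, so a minimiser over v \<in> [exp (- T / 2), 1] is first-order optimal.\<close>
lemma switch_endpoint_cost_deriv:
  "((\<lambda>v. (fst (switch_endpoint x0 T v))\<^sup>2 + (snd (switch_endpoint x0 T v))\<^sup>2)
     has_real_derivative 4 * xbar x0 * switching_function (switch_endpoint x0 T v) v) (at v)"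
  unfolding switch_endpoint_def switching_function_def Let_def
  by (rule derivative_eq_intros refl | simp add: power2_eq_square algebra_simps)+

lemma fst_switch_endpoint_pos:
  assumes "0 < T" "0 < xbar x0" and early: "2 * xbar x0 * exp (- (T / 2)) < fst x0 * exp (- T)"
  shows "0 < fst (switch_endpoint x0 T v)"
proof -
  have "exp (- T) < exp (- (T / 2))" "0 < exp (- (T / 2))" using \<open>0 < T\<close> by simp_all
  then have "exp (- T) < 2 * exp (- (T / 2))" by linarith
  then have "xbar x0 * exp (- T) < 2 * xbar x0 * exp (- (T / 2))"
    using \<open>0 < xbar x0\<close> by simp
  then have "xbar x0 * exp (- T) < fst x0 * exp (- T)" using early by linarith
  then have "0 < exp (- T) * (fst x0 - xbar x0)" by (simp add: algebra_simps)
  moreover have "0 \<le> xbar x0 * v\<^sup>2" using \<open>0 < xbar x0\<close> by simp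
  ultimately show ?thesis by (simp add: switch_endpoint_def Let_def)
qed

lemma snd_switch_endpoint_neg:
  assumes "0 < T" "0 < xbar x0" and early: "2 * xbar x0 * exp (- (T / 2)) < fst x0 * exp (- T)"
    and v: "exp (- (T / 2)) \<le> v" "v < 1"
    and stationary: "exp (- (T / 2)) < v \<Longrightarrow> switching_function (switch_endpoint x0 T v) v = 0"
  shows "snd (switch_endpoint x0 T v) < 0"
proof (cases "exp (- (T / 2)) < v")
  case True
  define X where "X = switch_endpoint x0 T v"
  have "(fst X - snd X) * (1 - v) = fst X"
    using stationary[OF True] by (simp add: X_def switching_function_def algebra_simps)
  moreover have "0 < fst X" using fst_switch_endpoint_pos[OF assms(1-3)] by (simp add: X_def)
  ultimately have "0 < fst X - snd X" using v by (smt (verit) mult_nonpos_nonneg)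
  moreover have "0 < v" using v(1) by (rule order_less_le_trans[OF exp_gt_zero])
  ultimately have "0 < (fst X - snd X) * v" by simp
  moreover have "snd X = - ((fst X - snd X) * v)"
    using stationary[OF True] by (simp add: X_def switching_function_def algebra_simps)
  ultimately show ?thesis by (simp add: X_def)
next
  case False
  then have "v = exp (- (T / 2))" using v by simp
  moreover have "exp (- (T / 2)) * exp (- (T / 2)) = exp (- T)" by (simp flip: exp_add)
  ultimately show ?thesis
    using early by (simp add: switch_endpoint_def Let_def power2_eq_square algebra_simps)
qed

lemma exists_optimal_switching_time:
  assumes "0 < T" "0 < xbar x0" and early: "2 * xbar x0 * exp (- (T / 2)) < fst x0 * exp (- T)"
  obtains \<tau> where "0 \<le> \<tau>" "\<tau> < T" "switch_optimality T (switch_traj x0 \<tau> T) \<tau>"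
proof -
  define v0 where "v0 = exp (- (T / 2))"
  have "0 < v0" "v0 < 1" using \<open>0 < T\<close> by (simp_all add: v0_def)
  have "0 < 4 * xbar x0 * switching_function (switch_endpoint x0 T 1) 1"
    using fst_switch_endpoint_pos[OF assms, of 1] \<open>0 < xbar x0\<close>
    by (simp add: switching_function_def)
  from interval_min_first_order[OF \<open>v0 < 1\<close> switch_endpoint_cost_deriv this]
  obtain v where v: "v0 \<le> v" "v < 1"
    and \<psi>: "0 \<le> switching_function (switch_endpoint x0 T v) v"
      "v0 < v \<Longrightarrow> switching_function (switch_endpoint x0 T v) v = 0"
    using \<open>0 < xbar x0\<close> by (auto simp: zero_le_mult_iff)
  have "0 < v" using v \<open>0 < v0\<close> by simp
  define \<tau> where "\<tau> = T + 2 * ln v"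
  have v_exp: "exp ((\<tau> - T) / 2) = v" using \<open>0 < v\<close> by (simp add: \<tau>_def)
  have X: "switch_traj x0 \<tau> T = switch_endpoint x0 T v"
    using switch_traj_endpoint[of v] \<open>0 < v\<close> v by (simp add: \<tau>_def)
  have "ln v0 \<le> ln v" using v \<open>0 < v0\<close> by simp
  then have "0 \<le> \<tau>" by (simp add: \<tau>_def v0_def)
  moreover have "\<tau> < T" using v \<open>0 < v\<close> by (simp add: \<tau>_def)
  moreover have "v0 < v" if "0 < \<tau>"
    using that v by (cases "v = v0") (auto simp: \<tau>_def v0_def)
  moreover have "snd (switch_endpoint x0 T v) < 0"
    using snd_switch_endpoint_neg[OF assms] v \<psi>(2) by (simp add: v0_def)
  moreover have "0 < fst (switch_endpoint x0 T v)" by (rule fst_switch_endpoint_pos[OF assms])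
  ultimately show ?thesis
    using \<psi> by (intro that[of \<tau>]) (auto simp: switch_optimality_def X v_exp)
qed

lemma switch_optimality_signs:
  assumes "switch_optimality T X \<tau>"
    and C_def: "C = fst X - snd X" and K_def: "K = 2 * snd X * exp ((\<tau> - T) / 2) + C * exp (\<tau> - T)"
  shows "0 \<le> t \<Longrightarrow> t < \<tau> \<Longrightarrow> 0 < - ((C * exp (t - T) + K) / 2) \<and> 0 < - ((K - C * exp (t - T)) / 2)"
    and "\<tau> < t \<Longrightarrow> 0 < C * exp (t - T) + snd X * exp ((t - T) / 2) \<and> 0 < - (snd X * exp ((t - T) / 2))"
proof -
  have "0 < C" "snd X < 0" and \<psi>: "0 \<le> C * exp ((\<tau> - T) / 2) + snd X"
    and \<psi>0: "0 < \<tau> \<Longrightarrow> C * exp ((\<tau> - T) / 2) + snd X = 0"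
    using assms(1) by (auto simp: switch_optimality_def switching_function_def C_def)
  have exp_split: "exp (t - T) = exp ((t - T) / 2) * exp ((t - T) / 2)" for t
    by (simp flip: exp_add)
  show "0 < - ((C * exp (t - T) + K) / 2) \<and> 0 < - ((K - C * exp (t - T)) / 2)"
    if "0 \<le> t" "t < \<tau>"
  proof -
    have "snd X = - C * exp ((\<tau> - T) / 2)" using \<psi>0 that by simp
    then have "K = - (C * exp (\<tau> - T))" using exp_split[of \<tau>] by (simp add: K_def algebra_simps)
    moreover have "C * exp (t - T) < C * exp (\<tau> - T)" "0 < C * exp (t - T)"
      using that \<open>0 < C\<close> by simp_all
    ultimately show ?thesis by simp
  qed
  show "0 < C * exp (t - T) + snd X * exp ((t - T) / 2) \<and> 0 < - (snd X * exp ((t - T) / 2))"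
    if "\<tau> < t"
  proof
    have "C * exp ((\<tau> - T) / 2) < C * exp ((t - T) / 2)" using that \<open>0 < C\<close> by simp
    then have "0 < exp ((t - T) / 2) * (C * exp ((t - T) / 2) + snd X)" using \<psi> by simp
    then show "0 < C * exp (t - T) + snd X * exp ((t - T) / 2)"
      using exp_split[of t] by (simp add: algebra_simps)
    show "0 < - (snd X * exp ((t - T) / 2))" using \<open>snd X < 0\<close> by (simp add: mult_neg_pos)
  qed
qed

lemma pos_mult_nonneg_combination:
  fixes x u w c d :: real
  assumes "0 < x" "0 \<le> u" "0 \<le> w" "0 < c" "0 < d"
  shows "0 \<le> x * (u * c + w * d) \<and> (x * (u * c + w * d) = 0 \<longrightarrow> u = 0 \<and> w = 0)"
  using assms by (auto simp: add_nonneg_eq_0_iff)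

definition switch_value :: "real \<Rightarrow> real \<times> real \<Rightarrow> real \<Rightarrow> real \<times> real \<Rightarrow> real" where
  "switch_value T X \<tau> x0 = (fst X - snd X) * exp (- T) * fst x0
     + (2 * snd X * exp ((\<tau> - T) / 2) + (fst X - snd X) * (exp (\<tau> - T) - exp (- T))) * xbar x0"

context controlled_trajectory
begin

text \<open>The costate of the switching control weights x1 by C exp (t - T) throughout, and xb by
  K - C exp (t - T) before the switch and by 2 X2 exp ((t - T) / 2) after it; at time T this
  pairs \<xi> T with X (here C = X1 - X2). The two definitions below are the resulting gaps in
  the Hamiltonian, which the control can only make nonnegative.\<close>
definition "switch_gap_before C K t =
  xb t * (- a1 t * ((C * exp (t - T) + K) / 2) - a2 t * ((K - C * exp (t - T)) / 2))"
definition "switch_gap_after C p t =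
  xb t * ((1 - a1 t) * (C * exp (t - T) + p * exp ((t - T) / 2)) - a2 t * (p * exp ((t - T) / 2)))"

lemma switch_value_integral_before:
  assumes "0 \<le> \<tau>" "\<tau> \<le> T"
    and C: "C = fst X - snd X" and K: "K = 2 * snd X * exp ((\<tau> - T) / 2) + C * exp (\<tau> - T)"
    and V: "V = C * exp (\<tau> - T) * x1 \<tau> + 2 * snd X * exp ((\<tau> - T) / 2) * xb \<tau>"
  shows "(switch_gap_before C K has_integral (V - switch_value T X \<tau> x0)) {0..\<tau>}"
proof -
  have "((\<lambda>t. C * exp (t - T) * x1 t + C * exp (t - T) * f1 t
          + ((- C * exp (t - T)) * xb t + (K - C * exp (t - T)) * fb t)) has_integral
       (C * exp (\<tau> - T) * x1 \<tau> - C * exp (0 - T) * x1 0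
          + ((K - C * exp (\<tau> - T)) * xb \<tau> - (K - C * exp (0 - T)) * xb 0))) {0..\<tau>}"
    using assms(1,2)
    by (intro has_integral_add has_integral_weighted)
       (auto intro!: derivative_eq_intros continuous_intros)
  moreover have "(\<lambda>t. C * exp (t - T) * x1 t + C * exp (t - T) * f1 t
          + ((- C * exp (t - T)) * xb t + (K - C * exp (t - T)) * fb t))
      = switch_gap_before C K"
    by (simp add: fun_eq_iff switch_gap_before_def f1_def fb_def field_simps)
  moreover have "C * exp (\<tau> - T) * x1 \<tau> - C * exp (0 - T) * x1 0
          + ((K - C * exp (\<tau> - T)) * xb \<tau> - (K - C * exp (0 - T)) * xb 0)
      = V - switch_value T X \<tau> x0"
    by (simp add: switch_value_def V K C algebra_simps)
  ultimately show ?thesis by simp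
qed

lemma switch_value_integral_after:
  assumes "0 \<le> \<tau>" "\<tau> \<le> T"
    and C: "C = fst X - snd X"
    and V: "V = C * exp (\<tau> - T) * x1 \<tau> + 2 * snd X * exp ((\<tau> - T) / 2) * xb \<tau>"
  shows "(switch_gap_after C (snd X) has_integral (fst X * x1 T + snd X * x2 T - V)) {\<tau>..T}"
proof -
  have "((\<lambda>t. C * exp (t - T) * x1 t + C * exp (t - T) * f1 t
          + (snd X * exp ((t - T) / 2) * xb t + 2 * snd X * exp ((t - T) / 2) * fb t)) has_integral
       (C * exp (T - T) * x1 T - C * exp (\<tau> - T) * x1 \<tau>
          + (2 * snd X * exp ((T - T) / 2) * xb T - 2 * snd X * exp ((\<tau> - T) / 2) * xb \<tau>)))
       {\<tau>..T}"
    using assms(1,2)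
    by (intro has_integral_add has_integral_weighted)
       (auto intro!: derivative_eq_intros continuous_intros)
  moreover have "(\<lambda>t. C * exp (t - T) * x1 t + C * exp (t - T) * f1 t
          + (snd X * exp ((t - T) / 2) * xb t + 2 * snd X * exp ((t - T) / 2) * fb t))
      = switch_gap_after C (snd X)"
    by (simp add: fun_eq_iff switch_gap_after_def f1_def fb_def field_simps)
  moreover have "C * exp (T - T) * x1 T - C * exp (\<tau> - T) * x1 \<tau>
          + (2 * snd X * exp ((T - T) / 2) * xb T - 2 * snd X * exp ((\<tau> - T) / 2) * xb \<tau>)
      = fst X * x1 T + snd X * x2 T - V"
    by (simp add: xb_def V C algebra_simps)
  ultimately show ?thesis by simp
qed

lemma switch_gap_before:
  assumes "switch_optimality T X \<tau>" "t \<in> {0..T}" "t < \<tau>"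
    and C: "C = fst X - snd X" and K: "K = 2 * snd X * exp ((\<tau> - T) / 2) + C * exp (\<tau> - T)"
  shows "0 \<le> switch_gap_before C K t \<and> (switch_gap_before C K t = 0 \<longrightarrow> \<alpha> t = (0, 0))"
proof -
  define c where "c = - ((C * exp (t - T) + K) / 2)"
  define d where "d = - ((K - C * exp (t - T)) / 2)"
  have "0 < c" "0 < d"
    using switch_optimality_signs(1)[OF assms(1) C K] assms(2,3) by (simp_all add: c_def d_def)
  then have "0 \<le> xb t * (a1 t * c + a2 t * d) \<and> (xb t * (a1 t * c + a2 t * d) = 0 \<longrightarrow> a1 t = 0 \<and> a2 t = 0)"
    using pos_mult_nonneg_combination xb_pos[OF assms(2)] control_bounds(1,3)[OF assms(2)] by blast
  moreover have "switch_gap_before C K t = xb t * (a1 t * c + a2 t * d)"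
    by (simp add: switch_gap_before_def c_def d_def field_simps)
  ultimately show ?thesis by (auto simp: \<alpha>_eq)
qed

lemma switch_gap_after:
  assumes "switch_optimality T X \<tau>" "t \<in> {0..T}" "\<tau> < t" and C: "C = fst X - snd X"
  shows "0 \<le> switch_gap_after C (snd X) t \<and> (switch_gap_after C (snd X) t = 0 \<longrightarrow> \<alpha> t = (1, 0))"
proof -
  define c where "c = C * exp (t - T) + snd X * exp ((t - T) / 2)"
  define d where "d = - (snd X * exp ((t - T) / 2))"
  have "0 < c" "0 < d"
    using switch_optimality_signs(2)[OF assms(1) C refl] assms(3) by (simp_all add: c_def d_def)
  moreover have "0 \<le> 1 - a1 t" using control_bounds(2)[OF assms(2)] by simp
  ultimately have "0 \<le> xb t * ((1 - a1 t) * c + a2 t * d)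
      \<and> (xb t * ((1 - a1 t) * c + a2 t * d) = 0 \<longrightarrow> 1 - a1 t = 0 \<and> a2 t = 0)"
    using pos_mult_nonneg_combination xb_pos[OF assms(2)] control_bounds(3)[OF assms(2)] by blast
  moreover have "switch_gap_after C (snd X) t = xb t * ((1 - a1 t) * c + a2 t * d)"
    by (simp add: switch_gap_after_def c_def d_def)
  ultimately show ?thesis by (auto simp: \<alpha>_eq)
qed

lemma switch_value_le:
  assumes "0 \<le> \<tau>" "\<tau> \<le> T" "switch_optimality T X \<tau>"
  shows "switch_value T X \<tau> x0 \<le> fst X * x1 T + snd X * x2 T"
    and "fst X * x1 T + snd X * x2 T = switch_value T X \<tau> x0 \<Longrightarrow>
      (AE t in lborel. t \<in> {0..\<tau>} \<longrightarrow> \<alpha> t = (0, 0)) \<and> (AE t in lborel. t \<in> {\<tau><..T} \<longrightarrow> \<alpha> t = (1, 0))"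
proof -
  define C where "C = fst X - snd X"
  define K where "K = 2 * snd X * exp ((\<tau> - T) / 2) + C * exp (\<tau> - T)"
  define V where "V = C * exp (\<tau> - T) * x1 \<tau> + 2 * snd X * exp ((\<tau> - T) / 2) * xb \<tau>"
  note before = switch_value_integral_before[OF assms(1,2) C_def K_def V_def]
    and gap_before = switch_gap_before[OF assms(3) _ _ C_def K_def]
  note after = switch_value_integral_after[OF assms(1,2) C_def V_def]
    and gap_after = switch_gap_after[OF assms(3) _ _ C_def]
  have "0 \<le> V - switch_value T X \<tau> x0"
    using gap_before assms(2) by (intro has_integral_nonneg_off_point(1)[OF before, of \<tau>]) auto
  moreover have "0 \<le> fst X * x1 T + snd X * x2 T - V"
    using gap_after assms(1) by (intro has_integral_nonneg_off_point(1)[OF after, of \<tau>]) auto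
  ultimately show "switch_value T X \<tau> x0 \<le> fst X * x1 T + snd X * x2 T" by simp
  assume "fst X * x1 T + snd X * x2 T = switch_value T X \<tau> x0"
  with \<open>0 \<le> V - switch_value T X \<tau> x0\<close> \<open>0 \<le> fst X * x1 T + snd X * x2 T - V\<close>
  have I0: "V - switch_value T X \<tau> x0 = 0" "fst X * x1 T + snd X * x2 T - V = 0" by simp_all
  have "AE t in lborel. t \<in> {0..\<tau>} \<longrightarrow> t \<noteq> \<tau> \<longrightarrow> switch_gap_before C K t = 0"
    by (rule has_integral_nonneg_off_point(2)[OF before]) (use gap_before assms(2) I0 in auto)
  then have "AE t in lborel. t \<in> {0..\<tau>} \<longrightarrow> \<alpha> t = (0, 0)"
    using AE_lborel_singleton[of \<tau>] by eventually_elim (use gap_before assms(2) in auto)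
  moreover have "AE t in lborel. t \<in> {\<tau>..T} \<longrightarrow> t \<noteq> \<tau> \<longrightarrow> switch_gap_after C (snd X) t = 0"
    by (rule has_integral_nonneg_off_point(2)[OF after]) (use gap_after assms(1) I0 in auto)
  then have "AE t in lborel. t \<in> {\<tau><..T} \<longrightarrow> \<alpha> t = (1, 0)"
    by eventually_elim (use gap_after assms(1) in auto)
  ultimately show "(AE t in lborel. t \<in> {0..\<tau>} \<longrightarrow> \<alpha> t = (0, 0)) \<and>
      (AE t in lborel. t \<in> {\<tau><..T} \<longrightarrow> \<alpha> t = (1, 0))" ..
qed

lemma switch_value_attained:
  assumes "0 \<le> \<tau>" "\<tau> \<le> T" and \<alpha>: "\<And>t. t \<in> {0..T} \<Longrightarrow> \<alpha> t = switch_control \<tau> t"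
  shows "fst X * x1 T + snd X * x2 T = switch_value T X \<tau> x0"
proof -
  define C where "C = fst X - snd X"
  define K where "K = 2 * snd X * exp ((\<tau> - T) / 2) + C * exp (\<tau> - T)"
  define V where "V = C * exp (\<tau> - T) * x1 \<tau> + 2 * snd X * exp ((\<tau> - T) / 2) * xb \<tau>"
  have a: "a1 t = (if t \<le> \<tau> then 0 else 1)" "a2 t = 0" if "t \<in> {0..T}" for t
    using \<alpha>[OF that] by (simp_all add: switch_control_def a1_def a2_def)
  have "0 = V - switch_value T X \<tau> x0"
    by (rule has_integral_unique[OF has_integral_spike_finite[where S = "{}", OF _ _ has_integral_0]
          switch_value_integral_before[OF assms(1,2) C_def K_def V_def]])
       (use a assms in \<open>auto simp: switch_gap_before_def\<close>)
  moreover have "0 = fst X * x1 T + snd X * x2 T - V"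
    by (rule has_integral_unique[OF has_integral_spike_finite[where S = "{\<tau>}", OF _ _ has_integral_0]
          switch_value_integral_after[OF assms(1,2) C_def V_def]])
       (use a assms in \<open>auto simp: switch_gap_after_def\<close>)
  ultimately show ?thesis by simp
qed

end

section \<open>Optimal controls\<close>

locale optimal_control = controlled_trajectory +
  assumes M_gt_1: "1 < M" and M_lt_2: "M < 2" and x0_ordered: "snd x0 < fst x0"
    and optimal: "\<And>\<beta> \<eta>. admissible M T \<beta> \<Longrightarrow> trajectory T \<beta> x0 \<eta> \<Longrightarrow> cost (\<xi> T) \<le> cost (\<eta> T)"
begin

lemma cost_endpoint: "cost (\<xi> T) = ((x1 T)\<^sup>2 + (x2 T)\<^sup>2) / 2"
  by (simp add: cost_def x1_def x2_def)

lemma fst_x0_pos: "0 < fst x0"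
  using xbar_x0_pos x0_ordered by (simp add: xbar_def)

text \<open>The control (1, M - 1) attains both lower bounds x1 T \<ge> A and xb T \<ge> B at once,
  ending at (A, 2 B - A). Writing x1 T = A + u and xb T = B + v with u, v \<ge> 0, the excess cost
  2 (A - (2 B - A)) u + 4 (2 B - A) v + u^2 + (2 v - u)^2 is positive unless u = v = 0.\<close>
lemma optimal_interior:
  assumes "xbar x0 * exp (- (M * T / 2)) < fst x0 * exp (- T)"
    and "fst x0 * exp (- T) < 2 * xbar x0 * exp (- (M * T / 2))"
  shows "(AE t in lborel. t \<in> {0..T} \<longrightarrow> \<alpha> t = (1, M - 1)) \<and> 0 < snd (\<xi> T) \<and> snd (\<xi> T) < fst (\<xi> T)"
proof -
  define A where "A = fst x0 * exp (- T)"
  define B where "B = xbar x0 * exp (- (M * T / 2))"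
  have "admissible M T (\<lambda>t. (1, M - 1)) \<and> trajectory T (\<lambda>t. (1, M - 1)) x0 (flow (1, M - 1) x0 0)"
    using M_gt_1 M_lt_2 by (intro constant_control_candidate) auto
  then have "cost (\<xi> T) \<le> cost (flow (1, M - 1) x0 0 T)" using optimal by blast
  moreover have "flow (1, M - 1) x0 0 T = (A, 2 * B - A)"
    using snd_eq_2_xbar_minus_fst[of "flow (1, M - 1) x0 0 T"]
    by (simp add: prod_eq_iff fst_flow xbar_flow A_def B_def)
  ultimately have cost: "(x1 T)\<^sup>2 + (x2 T)\<^sup>2 \<le> A\<^sup>2 + (2 * B - A)\<^sup>2"
    unfolding cost_endpoint by (simp add: cost_def)
  define u where "u = x1 T - A"
  define v where "v = xb T - B"
  have "0 \<le> u" using x1_lower_bound by (simp add: u_def A_def)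
  have "0 \<le> v" using xb_lower_bound by (simp add: v_def B_def)
  have x: "x1 T = A + u" "x2 T = (2 * B - A) + (2 * v - u)"
    by (simp_all add: u_def v_def xb_def field_simps)
  have "2 * ((A - (2 * B - A)) * u) + 4 * ((2 * B - A) * v) + (u\<^sup>2 + (2 * v - u)\<^sup>2) \<le> 0"
    using cost unfolding x by (simp add: power2_eq_square algebra_simps)
  moreover have "0 < A - (2 * B - A)" "0 < 2 * B - A" using assms by (simp_all add: A_def B_def)
  moreover have "0 \<le> u\<^sup>2 + (2 * v - u)\<^sup>2" by simp
  ultimately have "(A - (2 * B - A)) * u = 0" "(2 * B - A) * v = 0"
    using \<open>0 \<le> u\<close> \<open>0 \<le> v\<close> by (smt (verit) mult_nonneg_nonneg)+
  then have "u = 0" "v = 0" using \<open>0 < A - (2 * B - A)\<close> \<open>0 < 2 * B - A\<close> by simp_all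
  have "AE t in lborel. t \<in> {0..T} \<longrightarrow> a1 t = 1"
    by (rule x1_lower_bound_eq) (use \<open>u = 0\<close> in \<open>simp add: u_def A_def\<close>)
  moreover have "AE t in lborel. t \<in> {0..T} \<longrightarrow> a1 t + a2 t = M"
    by (rule xb_lower_bound_eq) (use \<open>v = 0\<close> in \<open>simp add: v_def B_def\<close>)
  ultimately have "AE t in lborel. t \<in> {0..T} \<longrightarrow> \<alpha> t = (1, M - 1)"
    by eventually_elim (auto simp: \<alpha>_eq)
  then show ?thesis
    using x \<open>u = 0\<close> \<open>v = 0\<close> \<open>0 < A - (2 * B - A)\<close> \<open>0 < 2 * B - A\<close> by (simp add: x1_def x2_def)
qed

text \<open>Since |\<xi> T|^2 = 2 (xb T)^2 + (x1 T - x2 T)^2 / 2 and xb T \<ge> B, the cost is at least B^2,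
  which is the cost of the endpoint (B, B) of a constant control (c, M - c), M - 1 \<le> c \<le> 1.\<close>
lemma optimal_balanced:
  assumes "fst x0 * exp (- T) \<le> xbar x0 * exp (- (M * T / 2))"
  shows "fst (\<xi> T) = snd (\<xi> T) \<and> (AE t in lborel. t \<in> {0..T} \<longrightarrow> fst (\<alpha> t) + snd (\<alpha> t) = M)"
proof -
  define b where "b = xbar x0"
  define A where "A = fst x0 * exp (- T)"
  define B where "B = b * exp (- (M * T / 2))"
  define g where "g = (exp (- (M * T / 2)) - exp (- T)) / (1 - M / 2)"
  define c where "c = 1 - (B - A) / (b * g)"
  have "0 < b" using xbar_x0_pos by (simp add: b_def)
  have "exp (- T) < exp (- (M * T / 2))" using M_lt_2 T_pos by simp
  then have "0 < g" using M_lt_2 by (simp add: g_def)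
  have "snd x0 * exp (- T) < b * exp (- T)" using x0_ordered by (simp add: b_def xbar_def)
  also have "\<dots> < B" using \<open>exp (- T) < exp (- (M * T / 2))\<close> \<open>0 < b\<close> by (simp add: B_def)
  finally have "snd x0 * exp (- T) < B" .
  moreover have "A = 2 * b * exp (- T) - snd x0 * exp (- T)"
    by (simp add: A_def b_def xbar_def field_simps)
  moreover have "(2 - M) * (b * g) = 2 * B - 2 * b * exp (- T)"
    using M_lt_2 by (simp add: g_def B_def field_simps)
  ultimately have "(B - A) / (b * g) \<le> 2 - M"
    using \<open>0 < b\<close> \<open>0 < g\<close> by (simp add: divide_le_eq)
  then have "M - 1 \<le> c" by (simp add: c_def)
  moreover have "0 \<le> (B - A) / (b * g)"
    using assms \<open>0 < b\<close> \<open>0 < g\<close> by (simp add: A_def B_def b_def)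
  then have "c \<le> 1" by (simp add: c_def)
  ultimately have "admissible M T (\<lambda>t. (c, M - c)) \<and> trajectory T (\<lambda>t. (c, M - c)) x0 (flow (c, M - c) x0 0)"
    using M_gt_1 M_lt_2 by (intro constant_control_candidate) auto
  then have "cost (\<xi> T) \<le> cost (flow (c, M - c) x0 0 T)" using optimal by blast
  moreover have "flow (c, M - c) x0 0 T = (B, B)"
  proof -
    have "fst (flow (c, M - c) x0 0 T) = A + (B - A) / (b * g) * b * g"
      by (simp add: fst_flow A_def c_def g_def b_def)
    also have "\<dots> = B" using \<open>0 < b\<close> \<open>0 < g\<close> by simp
    finally show ?thesis
      using snd_eq_2_xbar_minus_fst[of "flow (c, M - c) x0 0 T"]
      by (simp add: prod_eq_iff xbar_flow B_def b_def)
  qed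
  ultimately have cost: "(x1 T)\<^sup>2 + (x2 T)\<^sup>2 \<le> 2 * B\<^sup>2"
    unfolding cost_endpoint by (simp add: cost_def power2_eq_square)
  have "B \<le> xb T" "0 < B" using xb_lower_bound \<open>0 < b\<close> by (simp_all add: B_def b_def)
  have split: "(x1 T)\<^sup>2 + (x2 T)\<^sup>2 = 2 * (xb T)\<^sup>2 + (x1 T - x2 T)\<^sup>2 / 2"
    by (simp add: xb_def power2_eq_square field_simps)
  have "B\<^sup>2 \<le> (xb T)\<^sup>2" using \<open>B \<le> xb T\<close> \<open>0 < B\<close> by (intro power_mono) auto
  then have "(x1 T - x2 T)\<^sup>2 = 0" "(xb T)\<^sup>2 \<le> B\<^sup>2"
    using cost split zero_le_power2[of "x1 T - x2 T"] by linarith+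
  then have "x1 T = x2 T" "xb T = B"
    using \<open>B \<le> xb T\<close> \<open>0 < B\<close> power2_le_imp_le[of "xb T" B] by auto
  then show ?thesis
    using xb_lower_bound_eq by (simp add: B_def b_def x1_def x2_def a1_def a2_def)
qed

text \<open>Some constant control (1, m - 1) with 1 \<le> m \<le> M ends at (A, 0), where
  A = x1(0) exp (- T) is the least possible value of x1 T; so no endpoint has smaller cost.\<close>
lemma optimal_vanishing:
  assumes "2 * xbar x0 * exp (- (M * T / 2)) \<le> fst x0 * exp (- T)"
    and "fst x0 * exp (- T) \<le> 2 * xbar x0 * exp (- (T / 2))"
  shows "(AE t in lborel. t \<in> {0..T} \<longrightarrow> fst (\<alpha> t) = 1) \<and> snd (\<xi> T) = 0"
proof -
  define A where "A = fst x0 * exp (- T)"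
  have "\<exists>m. 1 \<le> m \<and> m \<le> M \<and> 2 * xbar x0 * exp (- (m * T / 2)) = A"
    by (rule IVT2') (use assms M_gt_1 in \<open>auto simp: A_def intro!: continuous_intros\<close>)
  then obtain m where m: "1 \<le> m" "m \<le> M" "2 * xbar x0 * exp (- (m * T / 2)) = A"
    by blast
  then have "admissible M T (\<lambda>t. (1, m - 1)) \<and> trajectory T (\<lambda>t. (1, m - 1)) x0 (flow (1, m - 1) x0 0)"
    using M_lt_2 by (intro constant_control_candidate) auto
  then have "cost (\<xi> T) \<le> cost (flow (1, m - 1) x0 0 T)" using optimal by blast
  moreover have "flow (1, m - 1) x0 0 T = (A, 0)"
    using m snd_eq_2_xbar_minus_fst[of "flow (1, m - 1) x0 0 T"]
    by (simp add: prod_eq_iff fst_flow xbar_flow A_def)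
  ultimately have cost: "(x1 T)\<^sup>2 + (x2 T)\<^sup>2 \<le> A\<^sup>2"
    unfolding cost_endpoint by (simp add: cost_def)
  have "0 < A" using fst_x0_pos by (simp add: A_def)
  have "A \<le> x1 T" using x1_lower_bound by (simp add: A_def)
  then have "A\<^sup>2 \<le> (x1 T)\<^sup>2" using \<open>0 < A\<close> by (intro power_mono) auto
  then have "(x2 T)\<^sup>2 = 0" "(x1 T)\<^sup>2 \<le> A\<^sup>2" using cost zero_le_power2[of "x2 T"] by linarith+
  then have "x2 T = 0" "x1 T = A"
    using \<open>A \<le> x1 T\<close> \<open>0 < A\<close> power2_le_imp_le[of "x1 T" A] by auto
  then show ?thesis using x1_lower_bound_eq by (simp add: A_def x2_def a1_def)
qed

text \<open>The switching trajectory with a first-order optimal switching time ends at X with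
  |X|^2 = switch_value \<le> \<langle>X, \<xi> T\<rangle>, while optimality gives |\<xi> T| \<le> |X|; hence \<xi> T = X and
  the inequality is an equality, which forces the switching control.\<close>
lemma optimal_switching:
  assumes "2 * xbar x0 * exp (- (T / 2)) < fst x0 * exp (- T)"
  shows "(\<forall>t\<in>{0..T}. snd (\<xi> t) < 0) \<and>
    (\<exists>ts. 0 \<le> ts \<and> ts < T \<and> (AE t in lborel. t \<in> {0..ts} \<longrightarrow> \<alpha> t = (0, 0)) \<and>
       (AE t in lborel. t \<in> {ts<..T} \<longrightarrow> \<alpha> t = (1, 0)))"
proof -
  obtain \<tau> where \<tau>: "0 \<le> \<tau>" "\<tau> < T" and opt: "switch_optimality T (switch_traj x0 \<tau> T) \<tau>"
    using exists_optimal_switching_time[OF T_pos xbar_x0_pos assms] by blast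
  define X where "X = switch_traj x0 \<tau> T"
  have cand: "admissible M T (switch_control \<tau>) \<and> trajectory T (switch_control \<tau>) x0 (switch_traj x0 \<tau>)"
    using \<tau> M_gt_1 by (intro switch_candidate) auto
  then interpret switch: controlled_trajectory M T x0 "switch_control \<tau>" "switch_traj x0 \<tau>"
    using T_pos xbar_x0_pos by unfold_locales auto
  have "fst X * fst X + snd X * snd X = switch_value T X \<tau> x0"
    using switch.switch_value_attained[of \<tau> X] \<tau> by (simp add: X_def switch.x1_def switch.x2_def)
  also have "\<dots> \<le> fst X * x1 T + snd X * x2 T"
    using switch_value_le(1)[OF _ _ opt[folded X_def]] \<tau> by simp
  finally have inner: "fst X * fst X + snd X * snd X \<le> fst X * x1 T + snd X * x2 T" .
  have "cost (\<xi> T) \<le> cost X" unfolding X_def using optimal cand by blast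
  then have "(x1 T)\<^sup>2 + (x2 T)\<^sup>2 \<le> (fst X)\<^sup>2 + (snd X)\<^sup>2"
    unfolding cost_endpoint by (simp add: cost_def)
  moreover have "(x1 T - fst X)\<^sup>2 + (x2 T - snd X)\<^sup>2
      = (x1 T)\<^sup>2 + (x2 T)\<^sup>2 - 2 * (fst X * x1 T + snd X * x2 T) + ((fst X)\<^sup>2 + (snd X)\<^sup>2)"
    by (simp add: power2_eq_square algebra_simps)
  ultimately have "(x1 T - fst X)\<^sup>2 + (x2 T - snd X)\<^sup>2 \<le> 0"
    using inner by (simp add: power2_eq_square)
  then have "x1 T = fst X" "x2 T = snd X" by (simp_all add: sum_power2_le_zero_iff)
  then have "fst X * x1 T + snd X * x2 T = switch_value T X \<tau> x0"
    using inner \<open>fst X * fst X + snd X * snd X = switch_value T X \<tau> x0\<close> by simp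
  then have "(AE t in lborel. t \<in> {0..\<tau>} \<longrightarrow> \<alpha> t = (0, 0)) \<and> (AE t in lborel. t \<in> {\<tau><..T} \<longrightarrow> \<alpha> t = (1, 0))"
    using switch_value_le(2)[OF _ _ opt[folded X_def]] \<tau> by simp
  moreover have "snd (\<xi> t) < 0" if "t \<in> {0..T}" for t
  proof -
    have "exp t * x2 t \<le> exp T * x2 T" by (rule exp_x2_mono[OF that])
    also have "\<dots> < 0"
      using opt \<open>x2 T = snd X\<close> by (simp add: X_def switch_optimality_def mult_pos_neg)
    finally show ?thesis by (simp add: x2_def mult_less_0_iff)
  qed
  ultimately show ?thesis using \<tau> by blast
qed

end

lemma exp_threshold_iff:
  fixes b p m T :: real
  assumes "0 < b" "0 < p" "m < 2"
  shows "b * exp (- (m * T / 2)) < p * exp (- T) \<longleftrightarrow> T < 2 / (2 - m) * ln (p / b)"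
    and "b * exp (- (m * T / 2)) \<le> p * exp (- T) \<longleftrightarrow> T \<le> 2 / (2 - m) * ln (p / b)"
proof -
  have c: "0 < 1 - m / 2" using assms by simp
  have "b * exp (- (m * T / 2)) = b * exp ((1 - m / 2) * T) * exp (- T)"
    by (simp add: mult.assoc flip: exp_add) (simp add: algebra_simps)
  then have "b * exp (- (m * T / 2)) < p * exp (- T) \<longleftrightarrow> exp ((1 - m / 2) * T) < p / b"
    and "b * exp (- (m * T / 2)) \<le> p * exp (- T) \<longleftrightarrow> exp ((1 - m / 2) * T) \<le> p / b"
    using assms by (simp_all add: field_simps)
  moreover have "exp ((1 - m / 2) * T) < p / b \<longleftrightarrow> (1 - m / 2) * T < ln (p / b)"
    and "exp ((1 - m / 2) * T) \<le> p / b \<longleftrightarrow> (1 - m / 2) * T \<le> ln (p / b)"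
    using assms by (metis divide_pos_pos exp_le_cancel_iff exp_less_cancel_iff exp_ln)+
  moreover have "2 / (2 - m) * ln (p / b) = ln (p / b) / (1 - m / 2)"
    using assms by (simp add: field_simps)
  ultimately show "b * exp (- (m * T / 2)) < p * exp (- T) \<longleftrightarrow> T < 2 / (2 - m) * ln (p / b)"
    and "b * exp (- (m * T / 2)) \<le> p * exp (- T) \<longleftrightarrow> T \<le> 2 / (2 - m) * ln (p / b)"
    using c by (simp_all add: pos_less_divide_eq pos_le_divide_eq mult.commute)
qed

theorem theorem4:
  fixes T M :: real and x0 :: "real \<times> real"
    and \<alpha> \<xi> :: "real \<Rightarrow> real \<times> real"
    and t0 t1 t2 :: real
  assumes "T > 0" and "1 < M" and "M < 2"
    and "xbar x0 > 0" and "fst x0 > snd x0"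
    and opt: "optimal M T x0 \<alpha> \<xi>"
    and order: "\<forall>t\<in>{0..T}. fst (\<xi> t) \<ge> snd (\<xi> t)"
    and t0_def: "t0 = 2 * ln (fst x0 / (2 * xbar x0))"
    and t1_def: "t1 = 2 / (2 - M) * ln (fst x0 / (2 * xbar x0))"
    and t2_def: "t2 = 2 / (2 - M) * ln (fst x0 / xbar x0)"
  shows
   "(snd x0 > 0 \<longrightarrow>
       (T < t2 \<longrightarrow> (AE t in lborel. t \<in> {0..T} \<longrightarrow> \<alpha> t = (1, M - 1))
                   \<and> 0 < snd (\<xi> T) \<and> snd (\<xi> T) < fst (\<xi> T)) \<and>
       (t2 \<le> T \<longrightarrow> fst (\<xi> T) = snd (\<xi> T)
                   \<and> (AE t in lborel. t \<in> {0..T} \<longrightarrow> fst (\<alpha> t) + snd (\<alpha> t) = M))) \<and>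
    (snd x0 < 0 \<longrightarrow>
       (T < t0 \<longrightarrow> (\<forall>t\<in>{0..T}. snd (\<xi> t) < 0) \<and>
          (\<exists>ts. 0 \<le> ts \<and> ts < T \<and>
             (AE t in lborel. t \<in> {0..ts} \<longrightarrow> \<alpha> t = (0, 0)) \<and>
             (AE t in lborel. t \<in> {ts<..T} \<longrightarrow> \<alpha> t = (1, 0)))) \<and>
       (t0 \<le> T \<and> T \<le> t1 \<longrightarrow> (AE t in lborel. t \<in> {0..T} \<longrightarrow> fst (\<alpha> t) = 1) \<and> snd (\<xi> T) = 0) \<and>
       (t1 < T \<and> T < t2 \<longrightarrow> (AE t in lborel. t \<in> {0..T} \<longrightarrow> \<alpha> t = (1, M - 1))
                   \<and> 0 < snd (\<xi> T) \<and> snd (\<xi> T) < fst (\<xi> T)) \<and>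
       (t2 \<le> T \<longrightarrow> (AE t in lborel. t \<in> {0..T} \<longrightarrow> fst (\<alpha> t) + snd (\<alpha> t) = M)
                   \<and> fst (\<xi> T) = snd (\<xi> T)))"
proof -
  interpret optimal_control M T x0 \<alpha> \<xi>
    using assms by unfold_locales (auto simp: optimal_def)
  have b: "0 < xbar x0" "0 < 2 * xbar x0" and p: "0 < fst x0" using assms fst_x0_pos by auto
  have t2: "xbar x0 * exp (- (M * T / 2)) < fst x0 * exp (- T) \<longleftrightarrow> T < t2"
    using exp_threshold_iff(1)[OF b(1) p M_lt_2] by (simp add: t2_def)
  have t1: "2 * xbar x0 * exp (- (M * T / 2)) \<le> fst x0 * exp (- T) \<longleftrightarrow> T \<le> t1"
    using exp_threshold_iff(2)[OF b(2) p M_lt_2] by (simp add: t1_def)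
  have t0: "2 * xbar x0 * exp (- (T / 2)) < fst x0 * exp (- T) \<longleftrightarrow> T < t0"
    using exp_threshold_iff(1)[OF b(2) p, of 1] by (simp add: t0_def)
  have "fst x0 * exp (- T) < 2 * xbar x0 * exp (- (M * T / 2))" if "0 < snd x0"
  proof -
    have "fst x0 < 2 * xbar x0" using that by (simp add: xbar_def)
    moreover have "exp (- T) < exp (- (M * T / 2))" using assms by simp
    ultimately show ?thesis using p by (intro mult_strict_mono) auto
  qed
  then show ?thesis
    using optimal_interior optimal_balanced optimal_vanishing optimal_switching t0 t1 t2
    by (smt (verit))
qed

end
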